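(* Let $\eta\in(0,1)$ be a constant. For any integers $k,d,s$ satisfying $s=k^{1-\eta}$ and $k\ge\log d+o(k)+O_\eta(1)$ (in particular, $k\ge 2^{2/\eta}$), every $(k,d,s)$-CNF formula is $\theta$-resilient for some $\theta>0$ depending only on $k$ and $\eta$.
   Context: $\log$ denotes $\log_2$. A $(k,d,s)$-CNF formula $\Phi=(V,\mathcal C)$ is a CNF formula in which every clause contains exactly $k$ distinct variables, every variable appears in at most $d$ clauses, and any two distinct clauses share at most $s$ variables. For a clause $c$ on a set $\mathrm{vbl}(c)$ of $k$ distinct variables, its forbidden assignment is the unique assignment of $\mathrm{vbl}(c)$ violating $c$. $\mu_\Phi$ is the uniform distribution over satisfying assignments of $\Phi$. $\Phi$ is $\theta$-resilient if for every clause $c^*\notin\mathcal C$ on $k$ distinct variables with forbidden assignment $\sigma^*$, $\Pr_{X\sim\mu_\Phi}[X_{\mathrm{vbl}(c^* )}=\sigma^*]$ is either $0$ or at least $\theta$. (The paper writes this conclusion as "$O_{k,\eta}(1)$-resilient".) *)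

theory Defs
  imports Complex_Main "HOL-Library.Landau_Symbols" "HOL-Library.FuncSet"
begin

text \<open>A clause is a finite set of literals; a literal (x,b) is satisfied by
  an assignment sigma iff sigma x = b.\<close>
type_synonym 'v clause = "('v \<times> bool) set"

definition vbl :: "'v clause \<Rightarrow> 'v set" where
  "vbl c = fst ` c"

text \<open>A clause on exactly k distinct variables (no repeated / complementary literals).\<close>
definition is_clause :: "nat \<Rightarrow> 'v clause \<Rightarrow> bool" where
  "is_clause k c \<longleftrightarrow> finite c \<and> card c = k \<and> card (vbl c) = k"

definition satisfies :: "('v \<Rightarrow> bool) \<Rightarrow> 'v clause \<Rightarrow> bool" where
  "satisfies \<sigma> c \<longleftrightarrow> (\<exists>(x,b)\<in>c. \<sigma> x = b)"

definition hits_forbidden :: "('v \<Rightarrow> bool) \<Rightarrow> 'v clause \<Rightarrow> bool" where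
  "hits_forbidden \<sigma> c \<longleftrightarrow> (\<forall>(x,b)\<in>c. \<sigma> x \<noteq> b)"

definition kds_CNF :: "nat \<Rightarrow> nat \<Rightarrow> nat \<Rightarrow> 'v set \<Rightarrow> 'v clause set \<Rightarrow> bool" where
  "kds_CNF k d s V C \<longleftrightarrow>
     finite V \<and> finite C \<and>
     (\<forall>c\<in>C. is_clause k c \<and> vbl c \<subseteq> V) \<and>
     (\<forall>x\<in>V. card {c\<in>C. x \<in> vbl c} \<le> d) \<and>
     (\<forall>c1\<in>C. \<forall>c2\<in>C. c1 \<noteq> c2 \<longrightarrow> card (vbl c1 \<inter> vbl c2) \<le> s)"

definition assignments :: "'v set \<Rightarrow> ('v \<Rightarrow> bool) set" where
  "assignments V = (V \<rightarrow>\<^sub>E (UNIV :: bool set))"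

definition sat_assignments :: "'v set \<Rightarrow> 'v clause set \<Rightarrow> ('v \<Rightarrow> bool) set" where
  "sat_assignments V C = {\<sigma> \<in> assignments V. \<forall>c\<in>C. satisfies \<sigma> c}"

definition prob_forbidden :: "'v set \<Rightarrow> 'v clause set \<Rightarrow> 'v clause \<Rightarrow> real" where
  "prob_forbidden V C c =
     real (card {\<sigma> \<in> sat_assignments V C. hits_forbidden \<sigma> c}) / real (card (sat_assignments V C))"

definition resilient :: "real \<Rightarrow> nat \<Rightarrow> 'v set \<Rightarrow> 'v clause set \<Rightarrow> bool" where
  "resilient \<theta> k V C \<longleftrightarrow>
     (\<forall>c. is_clause k c \<and> vbl c \<subseteq> V \<and> c \<notin> C \<longrightarrow>
        prob_forbidden V C c = 0 \<or> prob_forbidden V C c \<ge> \<theta>)"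

end

theory Submission
  imports Defs "HOL-Real_Asymp.Real_Asymp"
begin

text \<open>Let \<open>c\<close> be a clause outside the formula whose forbidden assignment is hit by some satisfying
  assignment \<open>\<rho>\<close>. Enlarge \<open>vbl c\<close> to a set \<open>U\<close> by the variables of the clauses meeting \<open>vbl c\<close>
  in more than about \<open>k\<^bsup>1-\<eta>/2\<^esup>\<close> variables; since two clauses share at most
  \<open>s \<le> k\<^bsup>1-\<eta>\<^esup>\<close> variables there are fewer than \<open>k\<^bsup>\<eta>/2\<^esup>\<close> of these, so \<open>|U| \<le> k + k\<^sup>2\<close>, while
  every other clause keeps \<open>k - O(k\<^bsup>1-\<eta>/2\<^esup>)\<close> variables outside \<open>U\<close>. Fix \<open>\<rho>\<close> on \<open>U\<close>: the
  clauses it does not satisfy there shrink to residual clauses that are still long, and a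
  counting form of the Lovasz Local Lemma shows that at least a fraction
  \<open>2\<^bsup>-|U|\<^esup> (1 - x)\<^bsup>|U| d\<^esup>\<close> of all satisfying assignments agree with \<open>\<rho>\<close> on \<open>U\<close>, hence hit the
  forbidden assignment of \<open>c\<close>. As \<open>d \<le> 2\<^sup>k\<close>, this fraction depends on \<open>k\<close> only.\<close>

section \<open>Counting assignments\<close>

lemma finite_assignments: "finite V \<Longrightarrow> finite (assignments V)"
  unfolding assignments_def by (simp add: finite_PiE)

lemma finite_sat_assignments: "finite V \<Longrightarrow> finite (sat_assignments V Cs)"
  unfolding sat_assignments_def by (simp add: finite_assignments)

lemma hits_forbidden_iff_not_satisfies: "hits_forbidden \<sigma> c \<longleftrightarrow> \<not> satisfies \<sigma> c"
  unfolding hits_forbidden_def satisfies_def by auto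

definition ignores :: "(('v \<Rightarrow> bool) \<Rightarrow> bool) \<Rightarrow> 'v set \<Rightarrow> bool" where
  "ignores P R \<longleftrightarrow> (\<forall>\<sigma> \<sigma>'. (\<forall>x. x \<notin> R \<longrightarrow> \<sigma> x = \<sigma>' x) \<longrightarrow> P \<sigma> = P \<sigma>')"

lemma ignores_subset: "ignores P R \<Longrightarrow> R' \<subseteq> R \<Longrightarrow> ignores P R'"
  unfolding ignores_def by blast

lemma ignores_conj: "ignores P R \<Longrightarrow> ignores Q R \<Longrightarrow> ignores (\<lambda>\<sigma>. P \<sigma> \<and> Q \<sigma>) R"
  unfolding ignores_def by blast

lemma ignores_hits_forbidden: "vbl L \<inter> R = {} \<Longrightarrow> ignores (\<lambda>\<sigma>. hits_forbidden \<sigma> L) R"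
  unfolding ignores_def hits_forbidden_def vbl_def by fastforce

definition partial_assignment :: "'v set \<Rightarrow> 'v clause \<Rightarrow> bool" where
  "partial_assignment V L \<longleftrightarrow> finite L \<and> inj_on fst L \<and> vbl L \<subseteq> V"

lemma partial_assignment_subset:
  "partial_assignment V L \<Longrightarrow> L' \<subseteq> L \<Longrightarrow> partial_assignment V L'"
  unfolding partial_assignment_def vbl_def by (auto intro: finite_subset inj_on_subset)

lemma partial_assignment_clause: "is_clause k c \<Longrightarrow> vbl c \<subseteq> V \<Longrightarrow> partial_assignment V c"
  unfolding is_clause_def partial_assignment_def vbl_def by (auto intro: eq_card_imp_inj_on)

definition count_assignments :: "'v set \<Rightarrow> (('v \<Rightarrow> bool) \<Rightarrow> bool) \<Rightarrow> real" where
  "count_assignments V P = real (card {\<sigma> \<in> assignments V. P \<sigma>})"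

lemma count_assignments_split:
  assumes "finite V"
  shows "count_assignments V P
    = count_assignments V (\<lambda>\<sigma>. P \<sigma> \<and> Q \<sigma>) + count_assignments V (\<lambda>\<sigma>. P \<sigma> \<and> \<not> Q \<sigma>)"
proof -
  have "{\<sigma> \<in> assignments V. P \<sigma>} =
      {\<sigma> \<in> assignments V. P \<sigma> \<and> Q \<sigma>} \<union> {\<sigma> \<in> assignments V. P \<sigma> \<and> \<not> Q \<sigma>}"
    by blast
  then show ?thesis
    unfolding count_assignments_def using finite_assignments[OF assms]
    by (simp add: card_Un_disjoint disjoint_iff)
qed

lemma count_assignments_mono:
  assumes "finite V" "\<And>\<sigma>. P \<sigma> \<Longrightarrow> Q \<sigma>"
  shows "count_assignments V P \<le> count_assignments V Q"
  unfolding count_assignments_def using assms finite_assignments[OF assms(1)]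
  by (intro of_nat_mono card_mono) auto

lemma count_assignments_flip:
  assumes "v \<in> V" "ignores H {v}"
  shows "count_assignments V (\<lambda>\<sigma>. H \<sigma> \<and> \<sigma> v = b) = count_assignments V (\<lambda>\<sigma>. H \<sigma> \<and> \<sigma> v \<noteq> b)"
proof -
  define flip where "flip \<sigma> = \<sigma>(v := \<not> \<sigma> v)" for \<sigma> :: "'a \<Rightarrow> bool"
  have "H (flip \<sigma>) = H \<sigma>" for \<sigma>
    using assms(2) unfolding ignores_def flip_def by simp
  moreover have "\<sigma> \<in> assignments V \<Longrightarrow> flip \<sigma> \<in> assignments V" for \<sigma>
    using assms(1) unfolding assignments_def flip_def by (auto simp: PiE_def extensional_def)
  moreover have "flip (flip \<sigma>) = \<sigma>" and "flip \<sigma> v = (\<not> \<sigma> v)" for \<sigma>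
    unfolding flip_def by auto
  ultimately have "bij_betw flip {\<sigma> \<in> assignments V. H \<sigma> \<and> \<sigma> v = b}
      {\<sigma> \<in> assignments V. H \<sigma> \<and> \<sigma> v \<noteq> b}"
    by (intro bij_betw_byWitness[where f' = flip]) auto
  then show ?thesis
    unfolding count_assignments_def by (simp add: bij_betw_same_card)
qed

lemma count_assignments_hits_forbidden:
  assumes "finite V" "partial_assignment V L" "ignores H (vbl L)"
  shows "count_assignments V (\<lambda>\<sigma>. H \<sigma> \<and> hits_forbidden \<sigma> L) * 2 ^ card L = count_assignments V H"
proof -
  have "finite L" using assms(2) unfolding partial_assignment_def by simp
  then show ?thesis using assms(2,3)
  proof (induction L arbitrary: H rule: finite_induct)
    case empty
    then show ?case by (simp add: hits_forbidden_def)
  next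
    case (insert l L)
    obtain v b where l: "l = (v, b)" by force
    have inj: "inj_on fst (insert (v, b) L)"
      using insert.prems(1) unfolding l partial_assignment_def by simp
    have "v \<notin> vbl L"
    proof
      assume "v \<in> vbl L"
      then obtain b' where "(v, b') \<in> L" unfolding vbl_def by force
      then have "(v, b') = (v, b)" by (intro inj_onD[OF inj]) auto
      with \<open>(v, b') \<in> L\<close> insert.hyps(2) show False unfolding l by simp
    qed
    moreover have "v \<in> V"
      using insert.prems(1) unfolding l partial_assignment_def vbl_def by auto
    moreover have "ignores H {v}"
      using insert.prems(2) by (rule ignores_subset) (simp add: l vbl_def)
    ultimately have flip: "count_assignments V (\<lambda>\<sigma>. (H \<sigma> \<and> hits_forbidden \<sigma> L) \<and> \<sigma> v = b)
        = count_assignments V (\<lambda>\<sigma>. (H \<sigma> \<and> hits_forbidden \<sigma> L) \<and> \<sigma> v \<noteq> b)"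
      by (intro count_assignments_flip ignores_conj ignores_hits_forbidden) auto
    have hits: "hits_forbidden \<sigma> (insert l L) \<longleftrightarrow> hits_forbidden \<sigma> L \<and> \<sigma> v \<noteq> b" for \<sigma>
      unfolding l hits_forbidden_def by auto
    have IH: "count_assignments V (\<lambda>\<sigma>. H \<sigma> \<and> hits_forbidden \<sigma> L) * 2 ^ card L
        = count_assignments V H"
    proof (rule insert.IH)
      show "partial_assignment V L"
        using insert.prems(1) by (rule partial_assignment_subset) blast
      show "ignores H (vbl L)"
        using insert.prems(2) by (rule ignores_subset) (auto simp: vbl_def)
    qed
    have "count_assignments V (\<lambda>\<sigma>. H \<sigma> \<and> hits_forbidden \<sigma> L)
        = 2 * count_assignments V (\<lambda>\<sigma>. H \<sigma> \<and> hits_forbidden \<sigma> (insert l L))"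
      using count_assignments_split[OF assms(1),
          of "\<lambda>\<sigma>. H \<sigma> \<and> hits_forbidden \<sigma> L" "\<lambda>\<sigma>. \<sigma> v = b"] flip
      by (simp add: hits conj_assoc)
    then show ?case
      using IH insert.hyps by simp
  qed
qed

definition agrees_on :: "'v set \<Rightarrow> ('v \<Rightarrow> bool) \<Rightarrow> ('v \<Rightarrow> bool) \<Rightarrow> bool" where
  "agrees_on U \<rho> \<sigma> \<longleftrightarrow> (\<forall>u\<in>U. \<sigma> u = \<rho> u)"

lemma count_assignments_pin:
  assumes "finite V" "U \<subseteq> V" "ignores H U"
  shows "count_assignments V (\<lambda>\<sigma>. H \<sigma> \<and> agrees_on U \<rho> \<sigma>) * 2 ^ card U = count_assignments V H"
proof -
  define L where "L = (\<lambda>u. (u, \<not> \<rho> u)) ` U"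
  have vbl_L: "vbl L = U" unfolding L_def vbl_def by force
  have "inj_on fst L" unfolding L_def inj_on_def by auto
  then have "partial_assignment V L"
    using assms(1,2) finite_subset unfolding partial_assignment_def vbl_L by (auto simp: L_def)
  moreover have "card L = card U" unfolding L_def by (rule card_image) (auto simp: inj_on_def)
  moreover have "hits_forbidden \<sigma> L \<longleftrightarrow> agrees_on U \<rho> \<sigma>" for \<sigma>
    unfolding hits_forbidden_def L_def agrees_on_def by auto
  ultimately show ?thesis
    using count_assignments_hits_forbidden[OF assms(1), of L H] assms(3) by (simp add: vbl_L)
qed

section \<open>A counting local lemma\<close>

definition avoids ::
    "(('v \<Rightarrow> bool) \<Rightarrow> bool) \<Rightarrow> ('i \<Rightarrow> 'v clause) \<Rightarrow> 'i set \<Rightarrow> ('v \<Rightarrow> bool) \<Rightarrow> bool" where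
  "avoids B E T \<sigma> \<longleftrightarrow> B \<sigma> \<and> (\<forall>t\<in>T. \<not> hits_forbidden \<sigma> (E t))"

lemma ignores_avoids:
  assumes "ignores B R" "\<And>t. t \<in> T \<Longrightarrow> vbl (E t) \<inter> R = {}"
  shows "ignores (avoids B E T) R"
  unfolding ignores_def avoids_def
proof (intro allI impI)
  fix \<sigma> \<sigma>' :: "'a \<Rightarrow> bool"
  assume agree: "\<forall>x. x \<notin> R \<longrightarrow> \<sigma> x = \<sigma>' x"
  then have "hits_forbidden \<sigma> (E t) = hits_forbidden \<sigma>' (E t)" if "t \<in> T" for t
    using ignores_hits_forbidden[OF assms(2)[OF that]] unfolding ignores_def by blast
  moreover have "B \<sigma> = B \<sigma>'"
    using assms(1) agree unfolding ignores_def by blast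
  ultimately show "(B \<sigma> \<and> (\<forall>t\<in>T. \<not> hits_forbidden \<sigma> (E t))) =
      (B \<sigma>' \<and> (\<forall>t\<in>T. \<not> hits_forbidden \<sigma>' (E t)))"
    by auto
qed

lemma count_avoids_union:
  assumes "finite V" "finite W" "T \<inter> W = {}" "x \<le> 1"
    and bad: "\<And>S c. S \<subseteq> T \<union> W \<Longrightarrow> c \<in> W \<Longrightarrow> c \<notin> S \<Longrightarrow>
      count_assignments V (\<lambda>\<sigma>. avoids B E S \<sigma> \<and> hits_forbidden \<sigma> (E c))
        \<le> x * count_assignments V (avoids B E S)"
  shows "(1 - x) ^ card W * count_assignments V (avoids B E T)
    \<le> count_assignments V (avoids B E (T \<union> W))"
  using assms(2,3) bad
proof (induction W rule: finite_induct)
  case empty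
  then show ?case by simp
next
  case (insert w W)
  have IH: "(1 - x) ^ card W * count_assignments V (avoids B E T)
      \<le> count_assignments V (avoids B E (T \<union> W))"
    using insert.prems by (intro insert.IH) auto
  have bad_w: "count_assignments V (\<lambda>\<sigma>. avoids B E (T \<union> W) \<sigma> \<and> hits_forbidden \<sigma> (E w))
      \<le> x * count_assignments V (avoids B E (T \<union> W))"
    using insert.hyps insert.prems by (intro insert.prems(2)) auto
  have "avoids B E (T \<union> insert w W)
      = (\<lambda>\<sigma>. avoids B E (T \<union> W) \<sigma> \<and> \<not> hits_forbidden \<sigma> (E w))"
    unfolding avoids_def by auto
  then have split: "count_assignments V (avoids B E (T \<union> insert w W))
      = count_assignments V (avoids B E (T \<union> W))
        - count_assignments V (\<lambda>\<sigma>. avoids B E (T \<union> W) \<sigma> \<and> hits_forbidden \<sigma> (E w))"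
    using count_assignments_split[OF assms(1),
        of "avoids B E (T \<union> W)" "\<lambda>\<sigma>. hits_forbidden \<sigma> (E w)"]
    by simp
  have "(1 - x) ^ card (insert w W) * count_assignments V (avoids B E T)
      = (1 - x) * ((1 - x) ^ card W * count_assignments V (avoids B E T))"
    using insert.hyps by simp
  also have "\<dots> \<le> (1 - x) * count_assignments V (avoids B E (T \<union> W))"
    using IH assms(4) by (intro mult_left_mono) auto
  also have "\<dots> \<le> count_assignments V (avoids B E (T \<union> insert w W))"
    unfolding split using bad_w by (simp add: algebra_simps)
  finally show ?case .
qed

text \<open>The Lovasz Local Lemma in counting form, for the uniform distribution on assignments
  conditioned on an event \<open>B\<close> independent of every bad event.\<close>

lemma counting_local_lemma:
  assumes "finite V" "finite F"
    and partial: "\<And>i. i \<in> F \<Longrightarrow> partial_assignment V (E i)"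
    and ignores_B: "\<And>i. i \<in> F \<Longrightarrow> ignores B (vbl (E i))"
    and "0 \<le> x" "x \<le> 1"
    and lll: "\<And>i. i \<in> F \<Longrightarrow>
      (1/2) ^ card (E i) \<le> x * (1 - x) ^ card {j \<in> F. j \<noteq> i \<and> vbl (E j) \<inter> vbl (E i) \<noteq> {}}"
  shows "T \<subseteq> F \<Longrightarrow> c \<in> F \<Longrightarrow> c \<notin> T \<Longrightarrow>
    count_assignments V (\<lambda>\<sigma>. avoids B E T \<sigma> \<and> hits_forbidden \<sigma> (E c))
      \<le> x * count_assignments V (avoids B E T)"
proof (induction "card T" arbitrary: T c rule: less_induct)
  case less
  define T1 where "T1 = {t \<in> T. vbl (E t) \<inter> vbl (E c) \<noteq> {}}"
  define T2 where "T2 = T - T1"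
  have "finite T" using less.prems(1) \<open>finite F\<close> by (rule finite_subset)
  then have "finite T1" unfolding T1_def by simp
  have T: "T = T2 \<union> T1" "T2 \<inter> T1 = {}" unfolding T1_def T2_def by auto
  have "ignores (avoids B E T2) (vbl (E c))"
    using ignores_B[OF less.prems(2)] by (rule ignores_avoids) (auto simp: T1_def T2_def)
  then have indep: "count_assignments V (\<lambda>\<sigma>. avoids B E T2 \<sigma> \<and> hits_forbidden \<sigma> (E c))
      = (1/2) ^ card (E c) * count_assignments V (avoids B E T2)"
    using count_assignments_hits_forbidden[OF assms(1) partial[OF less.prems(2)]]
    by (simp add: field_simps power_one_over)
  have deg: "(1 - x) ^ card {j \<in> F. j \<noteq> c \<and> vbl (E j) \<inter> vbl (E c) \<noteq> {}} \<le> (1 - x) ^ card T1"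
    using less.prems \<open>finite F\<close> \<open>0 \<le> x\<close> \<open>x \<le> 1\<close> unfolding T1_def
    by (intro power_decreasing card_mono) auto
  have "(1 - x) ^ card T1 * count_assignments V (avoids B E T2)
      \<le> count_assignments V (avoids B E (T2 \<union> T1))"
  proof (rule count_avoids_union[OF assms(1) \<open>finite T1\<close> T(2) \<open>x \<le> 1\<close>])
    fix S c' assume "S \<subseteq> T2 \<union> T1" "c' \<in> T1" "c' \<notin> S"
    then have "S \<subset> T" "c' \<in> T" using T by auto
    then show "count_assignments V (\<lambda>\<sigma>. avoids B E S \<sigma> \<and> hits_forbidden \<sigma> (E c'))
        \<le> x * count_assignments V (avoids B E S)"
      using less.prems(1) \<open>c' \<notin> S\<close> psubset_card_mono[OF \<open>finite T\<close>]
      by (intro less.hyps) auto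
  qed
  then have chain: "(1 - x) ^ card T1 * count_assignments V (avoids B E T2)
      \<le> count_assignments V (avoids B E T)"
    using T(1) by simp
  have "count_assignments V (\<lambda>\<sigma>. avoids B E T \<sigma> \<and> hits_forbidden \<sigma> (E c))
      \<le> count_assignments V (\<lambda>\<sigma>. avoids B E T2 \<sigma> \<and> hits_forbidden \<sigma> (E c))"
    using assms(1) by (rule count_assignments_mono) (auto simp: avoids_def T2_def)
  also have "\<dots> = (1/2) ^ card (E c) * count_assignments V (avoids B E T2)"
    by (rule indep)
  also have "\<dots> \<le> x * (1 - x) ^ card T1 * count_assignments V (avoids B E T2)"
    using lll[OF less.prems(2)] deg \<open>0 \<le> x\<close>
    by (intro mult_right_mono) (auto intro: order_trans mult_left_mono simp: count_assignments_def)
  also have "\<dots> \<le> x * count_assignments V (avoids B E T)"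
    using chain \<open>0 \<le> x\<close> by (simp add: mult.assoc mult_left_mono)
  finally show ?case .
qed

section \<open>Pinning a satisfying assignment\<close>

lemma card_clauses_meeting:
  assumes "kds_CNF k d s V Cs" "W \<subseteq> V"
  shows "card {c \<in> Cs. vbl c \<inter> W \<noteq> {}} \<le> card W * d"
proof -
  have "finite W" using assms unfolding kds_CNF_def by (auto intro: finite_subset)
  have "{c \<in> Cs. vbl c \<inter> W \<noteq> {}} = (\<Union>y\<in>W. {c \<in> Cs. y \<in> vbl c})" by auto
  then have "card {c \<in> Cs. vbl c \<inter> W \<noteq> {}} \<le> (\<Sum>y\<in>W. card {c \<in> Cs. y \<in> vbl c})"
    using card_UN_le[OF \<open>finite W\<close>] by simp
  also have "\<dots> \<le> card W * d"
    using assms sum_bounded_above[of W "\<lambda>y. card {c \<in> Cs. y \<in> vbl c}" d]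
    unfolding kds_CNF_def by auto
  finally show ?thesis .
qed

definition residual :: "'v set \<Rightarrow> 'v clause \<Rightarrow> 'v clause" where
  "residual U c = {l \<in> c. fst l \<notin> U}"

lemma vbl_residual: "vbl (residual U c) = vbl c - U"
  unfolding residual_def vbl_def by auto

lemma residual_disjoint: "vbl c \<inter> U = {} \<Longrightarrow> residual U c = c"
  unfolding residual_def vbl_def by force

lemma card_residual:
  assumes "is_clause k c"
  shows "card (residual U c) = k - card (vbl c \<inter> U)"
proof -
  have "card (residual U c) = card (vbl (residual U c))"
    using assms unfolding is_clause_def residual_def vbl_def
    by (intro card_image[symmetric] inj_on_subset[OF eq_card_imp_inj_on]) auto
  also have "\<dots> = card (vbl c) - card (vbl c \<inter> U)"
    unfolding vbl_residual using assms unfolding is_clause_def vbl_def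
    by (intro card_Diff_subset_Int) auto
  finally show ?thesis using assms unfolding is_clause_def by simp
qed

lemma residual_local_lemma:
  assumes K: "kds_CNF k d s V Cs" and "F \<subseteq> Cs" and "0 \<le> x" "x \<le> 1"
    and not_inside: "\<And>c. c \<in> F \<Longrightarrow> \<not> vbl c \<subseteq> U"
    and lll: "\<And>c. c \<in> Cs \<Longrightarrow> \<not> vbl c \<subseteq> U \<Longrightarrow>
      (1/2) ^ (k - card (vbl c \<inter> U)) \<le> x * (1 - x) ^ (k * d)"
    and "S \<subseteq> F" "c \<in> F" "c \<notin> S"
  shows "count_assignments V
      (\<lambda>\<sigma>. avoids (agrees_on U \<rho>) (residual U) S \<sigma> \<and> hits_forbidden \<sigma> (residual U c))
    \<le> x * count_assignments V (avoids (agrees_on U \<rho>) (residual U) S)"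
proof (rule counting_local_lemma[OF _ _ _ _ \<open>0 \<le> x\<close> \<open>x \<le> 1\<close> _ \<open>S \<subseteq> F\<close> \<open>c \<in> F\<close> \<open>c \<notin> S\<close>])
  have fin: "finite V" "finite Cs" and clause: "\<And>c. c \<in> Cs \<Longrightarrow> is_clause k c \<and> vbl c \<subseteq> V"
    using K unfolding kds_CNF_def by auto
  show "finite V" "finite F" using fin \<open>F \<subseteq> Cs\<close> finite_subset by auto
  show "partial_assignment V (residual U i)" if "i \<in> F" for i
  proof -
    have "partial_assignment V i"
      using clause[of i] that \<open>F \<subseteq> Cs\<close> partial_assignment_clause by blast
    then show ?thesis by (rule partial_assignment_subset) (auto simp: residual_def)
  qed
  show "ignores (agrees_on U \<rho>) (vbl (residual U i))" for i
    unfolding ignores_def vbl_residual agrees_on_def by auto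
  show "(1/2) ^ card (residual U i)
      \<le> x * (1 - x) ^ card {j \<in> F. j \<noteq> i \<and> vbl (residual U j) \<inter> vbl (residual U i) \<noteq> {}}"
    if "i \<in> F" for i
  proof -
    have i: "i \<in> Cs" "is_clause k i" "vbl i \<subseteq> V" using that \<open>F \<subseteq> Cs\<close> clause by auto
    have "card {j \<in> F. j \<noteq> i \<and> vbl (residual U j) \<inter> vbl (residual U i) \<noteq> {}}
        \<le> card {j \<in> Cs. vbl j \<inter> vbl i \<noteq> {}}"
      using fin \<open>F \<subseteq> Cs\<close> unfolding vbl_residual by (intro card_mono) auto
    also have "\<dots> \<le> k * d"
      using card_clauses_meeting[OF K i(3)] i(2) unfolding is_clause_def by simp
    finally have "(1 - x) ^ (k * d)
        \<le> (1 - x) ^ card {j \<in> F. j \<noteq> i \<and> vbl (residual U j) \<inter> vbl (residual U i) \<noteq> {}}"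
      using \<open>0 \<le> x\<close> \<open>x \<le> 1\<close> by (intro power_decreasing) auto
    then show ?thesis
      using lll[OF i(1) not_inside[OF that]] \<open>0 \<le> x\<close>
      unfolding card_residual[OF i(2)] by (meson mult_left_mono order_trans)
  qed
qed

definition unsettled :: "('v \<Rightarrow> bool) \<Rightarrow> 'v set \<Rightarrow> 'v clause set \<Rightarrow> 'v clause set" where
  "unsettled \<rho> U Cs = {c \<in> Cs. \<not> satisfies \<rho> {l \<in> c. fst l \<in> U}}"

lemma sat_if_avoids_unsettled:
  assumes "\<sigma> \<in> assignments V"
    and "avoids (agrees_on U \<rho>) (residual U) (unsettled \<rho> U Cs) \<sigma>"
  shows "\<sigma> \<in> sat_assignments V Cs"
  unfolding sat_assignments_def
proof (intro CollectI conjI ballI assms(1))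
  fix c assume "c \<in> Cs"
  show "satisfies \<sigma> c"
  proof (cases "c \<in> unsettled \<rho> U Cs")
    case True
    then have "\<not> hits_forbidden \<sigma> (residual U c)" using assms(2) unfolding avoids_def by blast
    then show ?thesis unfolding hits_forbidden_iff_not_satisfies satisfies_def residual_def by auto
  next
    case False
    then obtain y b where "(y, b) \<in> c" "y \<in> U" "\<rho> y = b"
      using \<open>c \<in> Cs\<close> unfolding unsettled_def satisfies_def by auto
    moreover have "\<sigma> y = \<rho> y"
      using assms(2) \<open>y \<in> U\<close> unfolding avoids_def agrees_on_def by blast
    ultimately show ?thesis unfolding satisfies_def by auto
  qed
qed

lemma count_pinned_avoids_ge_card_sat:
  assumes "finite V" "U \<subseteq> V" "G \<subseteq> Cs" "\<And>c. c \<in> G \<Longrightarrow> vbl c \<inter> U = {}"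
  shows "(1/2) ^ card U * card (sat_assignments V Cs)
    \<le> count_assignments V (avoids (agrees_on U \<rho>) (residual U) G)"
proof -
  have "sat_assignments V Cs \<subseteq> {\<sigma> \<in> assignments V. avoids (\<lambda>_. True) (residual U) G \<sigma>}"
  proof
    fix \<sigma> assume \<sigma>: "\<sigma> \<in> sat_assignments V Cs"
    have "\<not> hits_forbidden \<sigma> (residual U c)" if "c \<in> G" for c
    proof -
      have "residual U c = c" using assms(4)[OF that] by (rule residual_disjoint)
      then show ?thesis
        using \<sigma> that assms(3)
        unfolding sat_assignments_def hits_forbidden_iff_not_satisfies by auto
    qed
    then show "\<sigma> \<in> {\<sigma> \<in> assignments V. avoids (\<lambda>_. True) (residual U) G \<sigma>}"
      using \<sigma> unfolding sat_assignments_def avoids_def by auto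
  qed
  then have "card (sat_assignments V Cs)
      \<le> count_assignments V (avoids (\<lambda>_. True) (residual U) G)"
    unfolding count_assignments_def using finite_assignments[OF assms(1)]
    by (intro of_nat_mono card_mono) auto
  also have "\<dots> = count_assignments V
      (\<lambda>\<sigma>. avoids (\<lambda>_. True) (residual U) G \<sigma> \<and> agrees_on U \<rho> \<sigma>) * 2 ^ card U"
    using assms(1,2) by (rule count_assignments_pin[symmetric])
      (rule ignores_avoids, auto simp: ignores_def vbl_residual)
  also have "(\<lambda>\<sigma>. avoids (\<lambda>_. True) (residual U) G \<sigma> \<and> agrees_on U \<rho> \<sigma>)
      = avoids (agrees_on U \<rho>) (residual U) G"
    unfolding avoids_def by auto
  finally show ?thesis by (simp add: field_simps power_one_over)
qed

text \<open>The residuals of clauses disjoint from \<open>U\<close> do not see the pinning at all; the at most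
  \<open>|U| d\<close> others are added one at a time, each costing a factor \<open>1 - x\<close>.\<close>

lemma card_sat_pinned_ge:
  assumes K: "kds_CNF k d s V Cs" and "U \<subseteq> V" and \<rho>: "\<rho> \<in> sat_assignments V Cs"
    and "0 \<le> x" "x \<le> 1"
    and lll: "\<And>c. c \<in> Cs \<Longrightarrow> \<not> vbl c \<subseteq> U \<Longrightarrow>
      (1/2) ^ (k - card (vbl c \<inter> U)) \<le> x * (1 - x) ^ (k * d)"
  shows "(1 - x) ^ (card U * d) * (1/2) ^ card U * card (sat_assignments V Cs)
    \<le> card {\<sigma> \<in> sat_assignments V Cs. agrees_on U \<rho> \<sigma>}"
proof -
  have "finite V" "finite Cs" using K unfolding kds_CNF_def by auto
  define F where "F = unsettled \<rho> U Cs"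
  define F1 where "F1 = {c \<in> F. vbl c \<inter> U = {}}"
  define F2 where "F2 = F - F1"
  have "F \<subseteq> Cs" unfolding F_def unsettled_def by auto
  have not_inside: "\<not> vbl c \<subseteq> U" if "c \<in> F" for c
    using that \<rho> unfolding F_def unsettled_def sat_assignments_def satisfies_def vbl_def
    by fastforce
  have "finite F2" using \<open>finite Cs\<close> \<open>F \<subseteq> Cs\<close> unfolding F2_def by (auto intro: finite_subset)
  have "card F2 \<le> card {c \<in> Cs. vbl c \<inter> U \<noteq> {}}"
    using \<open>finite Cs\<close> \<open>F \<subseteq> Cs\<close> unfolding F1_def F2_def by (intro card_mono) auto
  then have "card F2 \<le> card U * d"
    using card_clauses_meeting[OF K \<open>U \<subseteq> V\<close>] by linarith
  then have "(1 - x) ^ (card U * d) * (1/2) ^ card U * card (sat_assignments V Cs)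
      \<le> (1 - x) ^ card F2 * ((1/2) ^ card U * card (sat_assignments V Cs))"
    using \<open>0 \<le> x\<close> \<open>x \<le> 1\<close> unfolding mult.assoc
    by (intro mult_right_mono power_decreasing) auto
  also have "\<dots> \<le> (1 - x) ^ card F2 * count_assignments V (avoids (agrees_on U \<rho>) (residual U) F1)"
    using \<open>finite V\<close> \<open>U \<subseteq> V\<close> \<open>x \<le> 1\<close>
    by (intro mult_left_mono count_pinned_avoids_ge_card_sat[of V U F1 Cs])
      (use \<open>F \<subseteq> Cs\<close> in \<open>auto simp: F1_def\<close>)
  also have "\<dots> \<le> count_assignments V (avoids (agrees_on U \<rho>) (residual U) (F1 \<union> F2))"
  proof (rule count_avoids_union[OF \<open>finite V\<close> \<open>finite F2\<close> _ \<open>x \<le> 1\<close>])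
    show "F1 \<inter> F2 = {}" unfolding F2_def by blast
    fix S c assume "S \<subseteq> F1 \<union> F2" "c \<in> F2" "c \<notin> S"
    then show "count_assignments V
        (\<lambda>\<sigma>. avoids (agrees_on U \<rho>) (residual U) S \<sigma> \<and> hits_forbidden \<sigma> (residual U c))
      \<le> x * count_assignments V (avoids (agrees_on U \<rho>) (residual U) S)"
      by (intro residual_local_lemma[OF K \<open>F \<subseteq> Cs\<close> \<open>0 \<le> x\<close> \<open>x \<le> 1\<close> not_inside lll])
        (auto simp: F1_def F2_def)
  qed
  also have "F1 \<union> F2 = F" unfolding F1_def F2_def by auto
  also have "count_assignments V (avoids (agrees_on U \<rho>) (residual U) F)
      \<le> card {\<sigma> \<in> sat_assignments V Cs. agrees_on U \<rho> \<sigma>}"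
    unfolding count_assignments_def F_def
    using finite_sat_assignments[OF \<open>finite V\<close>] sat_if_avoids_unsettled[of _ V U \<rho> Cs]
    by (intro of_nat_mono card_mono) (auto simp: avoids_def)
  finally show ?thesis .
qed

section \<open>Heavy clauses\<close>

lemma sum_card_le_card_UN_plus_overlaps:
  assumes "finite I" "\<And>i. i \<in> I \<Longrightarrow> finite (A i)"
  shows "(\<Sum>i\<in>I. card (A i))
    \<le> card (\<Union>i\<in>I. A i) + (\<Sum>i\<in>I. \<Sum>j\<in>I - {i}. card (A i \<inter> A j))"
  using assms
proof (induction I rule: finite_induct)
  case empty
  then show ?case by simp
next
  case (insert i I)
  have IH: "(\<Sum>i\<in>I. card (A i))
      \<le> card (\<Union>i\<in>I. A i) + (\<Sum>i\<in>I. \<Sum>j\<in>I - {i}. card (A i \<inter> A j))"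
    using insert by auto
  have "card (A i) + card (\<Union>i\<in>I. A i)
      = card (A i \<union> (\<Union>i\<in>I. A i)) + card (A i \<inter> (\<Union>i\<in>I. A i))"
    using insert by (intro card_Un_Int) auto
  moreover have "card (A i \<inter> (\<Union>i\<in>I. A i)) \<le> (\<Sum>j\<in>I. card (A i \<inter> A j))"
  proof -
    have "A i \<inter> (\<Union>i\<in>I. A i) = (\<Union>j\<in>I. A i \<inter> A j)" by blast
    then show ?thesis using card_UN_le[OF insert.hyps(1), of "\<lambda>j. A i \<inter> A j"] by simp
  qed
  moreover have "(\<Sum>i'\<in>I. \<Sum>j\<in>I - {i'}. card (A i' \<inter> A j))
      \<le> (\<Sum>i'\<in>I. \<Sum>j\<in>insert i I - {i'}. card (A i' \<inter> A j))"
    using insert.hyps by (intro sum_mono sum_mono2) auto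
  moreover have "insert i I - {i} = I" using insert.hyps by auto
  ultimately show ?case using IH insert.hyps by simp
qed

text \<open>Clauses meeting a \<open>k\<close>-set \<open>S\<close> in more than \<open>T\<close> variables pairwise overlap in at most \<open>s\<close>
  variables, so \<open>m\<close> of them would cover at least \<open>m (T + 1) - m\<^sup>2 s > k\<close> points of \<open>S\<close>.\<close>

lemma card_heavy_clauses_less:
  assumes K: "kds_CNF k d s V Cs" and "finite S" "card S \<le> k"
    and big: "k + m * m * s < m * (T + 1)"
  shows "card {h \<in> Cs. T < card (vbl h \<inter> S)} < m"
proof (rule ccontr)
  assume "\<not> ?thesis"
  then obtain H where H: "H \<subseteq> {h \<in> Cs. T < card (vbl h \<inter> S)}" "card H = m"
    by (meson not_less obtain_subset_with_card_n)
  have "finite H" using K H(1) unfolding kds_CNF_def by (auto intro: finite_subset)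
  have "m * (T + 1) \<le> (\<Sum>h\<in>H. card (vbl h \<inter> S))"
  proof -
    have "T + 1 \<le> card (vbl h \<inter> S)" if "h \<in> H" for h using H(1) that by auto
    then show ?thesis
      using H(2) sum_bounded_below[of H "T + 1" "\<lambda>h. card (vbl h \<inter> S)"] by simp
  qed
  also have "\<dots> \<le> card (\<Union>h\<in>H. vbl h \<inter> S)
      + (\<Sum>h\<in>H. \<Sum>j\<in>H - {h}. card ((vbl h \<inter> S) \<inter> (vbl j \<inter> S)))"
    using \<open>finite H\<close> \<open>finite S\<close> by (intro sum_card_le_card_UN_plus_overlaps) auto
  also have "card (\<Union>h\<in>H. vbl h \<inter> S) \<le> k"
    using \<open>finite S\<close> \<open>card S \<le> k\<close> card_mono[of S "\<Union>h\<in>H. vbl h \<inter> S"] by auto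
  also have "(\<Sum>h\<in>H. \<Sum>j\<in>H - {h}. card ((vbl h \<inter> S) \<inter> (vbl j \<inter> S)))
      \<le> (\<Sum>h\<in>H. \<Sum>j\<in>H - {h}. s)"
  proof (intro sum_mono)
    fix h j assume "h \<in> H" "j \<in> H - {h}"
    have "finite (vbl h)"
      using K H(1) \<open>h \<in> H\<close> unfolding kds_CNF_def is_clause_def vbl_def by auto
    then have "card ((vbl h \<inter> S) \<inter> (vbl j \<inter> S)) \<le> card (vbl h \<inter> vbl j)"
      by (intro card_mono) auto
    also have "\<dots> \<le> s"
    proof -
      have "h \<in> Cs" "j \<in> Cs" "h \<noteq> j" using H(1) \<open>h \<in> H\<close> \<open>j \<in> H - {h}\<close> by auto
      then show ?thesis using K unfolding kds_CNF_def by blast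
    qed
    finally show "card ((vbl h \<inter> S) \<inter> (vbl j \<inter> S)) \<le> s" .
  qed
  also have "(\<Sum>h\<in>H. \<Sum>j\<in>H - {h}. s) \<le> m * m * s"
    using \<open>finite H\<close> H(2) by (simp add: card_Diff_singleton_if)
  finally show False using big by linarith
qed

text \<open>\<open>q = k\<^bsup>\<eta>/2\<^esup>\<close> balances the threshold \<open>T \<approx> 5k/q\<close> against the total overlap \<open>q s\<close> of the
  fewer than \<open>q\<close> heavy clauses; both are \<open>O(k\<^bsup>1-\<eta>/2\<^esup>)\<close>.\<close>

lemma few_heavy_clauses:
  assumes K: "kds_CNF k d s V Cs" and "0 < \<eta>" "\<eta> < 1" "0 < k"
    and sk: "real s \<le> real k powr (1 - \<eta>)" and "finite S" "card S \<le> k"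
  obtains T
  where "real T + card {h \<in> Cs. T < card (vbl h \<inter> S)} * real s \<le> 6 * real k powr (1 - \<eta>/2) + 1"
    and "card {h \<in> Cs. T < card (vbl h \<inter> S)} \<le> k"
proof -
  define q where "q = real k powr (\<eta>/2)"
  have k1: "real k \<ge> 1" using \<open>0 < k\<close> by simp
  have q1: "q \<ge> 1" unfolding q_def using k1 \<open>0 < \<eta>\<close> by (intro ge_one_powr_ge_zero) auto
  have qk: "q \<le> real k"
    unfolding q_def using k1 \<open>\<eta> < 1\<close> powr_mono[of "\<eta>/2" 1 "real k"] by simp
  have kq: "real k / q = real k powr (1 - \<eta>/2)"
    unfolding q_def using k1 by (simp add: powr_diff)
  have qs: "q * real k powr (1 - \<eta>) = real k powr (1 - \<eta>/2)"
    unfolding q_def by (simp flip: powr_add)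
  have qqs: "q * q * real k powr (1 - \<eta>) = real k"
    unfolding q_def using k1 by (simp flip: powr_add)
  define m where "m = nat \<lceil>q\<rceil>"
  define T where "T = nat \<lceil>5 * real k / q\<rceil>"
  have m: "q \<le> real m" "real m < q + 1" unfolding m_def using q1 by linarith+
  have T: "5 * real k / q \<le> real T" "real T < 5 * real k / q + 1"
    unfolding T_def using k1 q1 by (simp_all add: of_nat_nat) linarith+
  have "5 * real k < real m * (real T + 1)"
  proof -
    have "5 * real k < q * (real T + 1)" using T(1) q1 by (simp add: field_simps)
    also have "\<dots> \<le> real m * (real T + 1)" using m(1) by (intro mult_right_mono) auto
    finally show ?thesis .
  qed
  moreover have "real m * real m * real s \<le> (2 * q) * (2 * q) * real k powr (1 - \<eta>)"
    using m q1 sk by (intro mult_mono) auto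
  ultimately have "real k + real m * real m * real s < real m * (real T + 1)"
    using qqs by (simp add: algebra_simps)
  then have "real (k + m * m * s) < real (m * (T + 1))" by (simp add: algebra_simps)
  then have "k + m * m * s < m * (T + 1)" by (rule of_nat_less_imp_less)
  then have "card {h \<in> Cs. T < card (vbl h \<inter> S)} < m"
    using K \<open>finite S\<close> \<open>card S \<le> k\<close> by (intro card_heavy_clauses_less)
  then have heavy: "real (card {h \<in> Cs. T < card (vbl h \<inter> S)}) < q" using m by linarith
  show thesis
  proof
    have "card {h \<in> Cs. T < card (vbl h \<inter> S)} * real s \<le> q * real k powr (1 - \<eta>)"
      using heavy sk by (intro mult_mono) auto
    then show "real T + card {h \<in> Cs. T < card (vbl h \<inter> S)} * real s
        \<le> 6 * real k powr (1 - \<eta>/2) + 1"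
      using T(2) kq qs by linarith
    show "card {h \<in> Cs. T < card (vbl h \<inter> S)} \<le> k" using heavy qk by linarith
  qed
qed

lemma heavy_closure:
  assumes K: "kds_CNF k d s V Cs" and "0 < \<eta>" "\<eta> < 1" "0 < k"
    and sk: "real s \<le> real k powr (1 - \<eta>)" and c: "is_clause k c" "vbl c \<subseteq> V"
  obtains U where "vbl c \<subseteq> U" "U \<subseteq> V" "card U \<le> k + k * k"
    and "\<And>c'. c' \<in> Cs \<Longrightarrow> \<not> vbl c' \<subseteq> U \<Longrightarrow>
      card (vbl c' \<inter> U) \<le> 6 * real k powr (1 - \<eta>/2) + 1"
proof -
  have clause: "is_clause k c' \<and> vbl c' \<subseteq> V" if "c' \<in> Cs" for c'
    using K that unfolding kds_CNF_def by auto
  have "finite (vbl c)" "card (vbl c) = k" using c unfolding is_clause_def vbl_def by auto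
  then obtain T
    where T: "real T + card {h \<in> Cs. T < card (vbl h \<inter> vbl c)} * real s
        \<le> 6 * real k powr (1 - \<eta>/2) + 1"
      "card {h \<in> Cs. T < card (vbl h \<inter> vbl c)} \<le> k"
    using few_heavy_clauses[OF K \<open>0 < \<eta>\<close> \<open>\<eta> < 1\<close> \<open>0 < k\<close> sk] by blast
  define Hs where "Hs = {h \<in> Cs. T < card (vbl h \<inter> vbl c)}"
  define U where "U = vbl c \<union> (\<Union>h\<in>Hs. vbl h)"
  have "finite Hs" using K unfolding Hs_def kds_CNF_def by simp
  show thesis
  proof (rule that[of U])
    show "vbl c \<subseteq> U" "U \<subseteq> V" using c clause unfolding U_def Hs_def by auto
    have "card U \<le> k + (\<Sum>h\<in>Hs. card (vbl h))"
      using card_Un_le[of "vbl c" "\<Union>h\<in>Hs. vbl h"] card_UN_le[OF \<open>finite Hs\<close>, of vbl]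
        \<open>card (vbl c) = k\<close>
      unfolding U_def by linarith
    also have "(\<Sum>h\<in>Hs. card (vbl h)) = card Hs * k"
      using clause unfolding Hs_def is_clause_def by simp
    also have "\<dots> \<le> k * k" using T(2) unfolding Hs_def by simp
    finally show "card U \<le> k + k * k" by simp
    fix c' assume "c' \<in> Cs" "\<not> vbl c' \<subseteq> U"
    then have "c' \<notin> Hs" unfolding U_def by auto
    have "vbl c' \<inter> U = (vbl c' \<inter> vbl c) \<union> (\<Union>h\<in>Hs. vbl c' \<inter> vbl h)"
      unfolding U_def by auto
    then have "card (vbl c' \<inter> U)
        \<le> card (vbl c' \<inter> vbl c) + card (\<Union>h\<in>Hs. vbl c' \<inter> vbl h)"
      by (simp add: card_Un_le)
    moreover have "card (\<Union>h\<in>Hs. vbl c' \<inter> vbl h) \<le> (\<Sum>h\<in>Hs. card (vbl c' \<inter> vbl h))"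
      by (rule card_UN_le[OF \<open>finite Hs\<close>])
    moreover have "card (vbl c' \<inter> vbl h) \<le> s" if "h \<in> Hs" for h
    proof -
      have "h \<in> Cs" "c' \<noteq> h" using that \<open>c' \<notin> Hs\<close> unfolding Hs_def by auto
      then show ?thesis using K \<open>c' \<in> Cs\<close> unfolding kds_CNF_def by blast
    qed
    then have "(\<Sum>h\<in>Hs. card (vbl c' \<inter> vbl h)) \<le> card Hs * s"
      using sum_bounded_above[of Hs "\<lambda>h. card (vbl c' \<inter> vbl h)" s] by simp
    moreover have "card (vbl c' \<inter> vbl c) \<le> T"
      using \<open>c' \<in> Cs\<close> \<open>c' \<notin> Hs\<close> unfolding Hs_def by auto
    ultimately have "card (vbl c' \<inter> U) \<le> T + card Hs * s" by linarith
    then have "real (card (vbl c' \<inter> U)) \<le> real T + card Hs * real s"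
      by (metis of_nat_add of_nat_mono of_nat_mult)
    then show "card (vbl c' \<inter> U) \<le> 6 * real k powr (1 - \<eta>/2) + 1"
      using T(1) unfolding Hs_def by linarith
  qed
qed

section \<open>Resilience\<close>

lemma local_lemma_parameter:
  fixes k d :: nat and r :: real
  assumes "0 < k" and r: "2 + log 2 k + log 2 d \<le> r"
  obtains x :: real where "0 \<le> x" "x \<le> 1/2"
    and "\<And>j. r \<le> real j \<Longrightarrow> (1/2) ^ j \<le> x * (1 - x) ^ (k * d)"
proof -
  define x where "x = 2 * 2 powr (- r)"
  have "log 2 d \<ge> 0" by (cases "d = 0") (auto simp: log_def)
  moreover have "log 2 k \<ge> 0" using \<open>0 < k\<close> by simp
  ultimately have "2 \<le> r" using r by linarith
  have "x \<le> 2 * 2 powr (- 2)" unfolding x_def using \<open>2 \<le> r\<close> by simp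
  then have "x \<le> 1/2" by (simp add: powr_minus power2_eq_square)
  have "4 * (real k * real d) \<le> 2 powr r"
  proof (cases "d = 0")
    case False
    then have "4 * (real k * real d) = 2 powr (2 + log 2 k + log 2 d)"
      using \<open>0 < k\<close> by (simp add: powr_add)
    also have "\<dots> \<le> 2 powr r" using r by simp
    finally show ?thesis .
  qed simp
  then have "real (k * d) * x \<le> 1/2"
    unfolding x_def by (simp add: powr_minus field_simps)
  moreover have "1 - real (k * d) * x \<le> (1 - x) ^ (k * d)"
    using Bernoulli_inequality[of "- x" "k * d"] \<open>x \<le> 1/2\<close> by simp
  ultimately have half: "1/2 \<le> (1 - x) ^ (k * d)" by linarith
  show thesis
  proof
    show "0 \<le> x" "x \<le> 1/2" using \<open>x \<le> 1/2\<close> by (auto simp: x_def)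
    fix j :: nat assume "r \<le> real j"
    have "(1/2) ^ j = 2 powr (- real j)"
      by (simp add: powr_minus powr_realpow power_one_over inverse_eq_divide)
    also have "\<dots> \<le> x / 2" unfolding x_def using \<open>r \<le> real j\<close> by simp
    also have "\<dots> \<le> x * (1 - x) ^ (k * d)"
      using half by (simp add: x_def)
    finally show "(1/2) ^ j \<le> x * (1 - x) ^ (k * d)" .
  qed
qed

lemma pinning_loss_ge:
  fixes x :: real
  assumes "0 \<le> x" "x \<le> 1/2" "n \<le> k + k * k" "d \<le> 2 ^ k"
  shows "(1/2) ^ ((k + k * k) * (2 ^ k + 1)) \<le> (1 - x) ^ (n * d) * (1/2) ^ n"
proof -
  have "(1/2::real) ^ ((k + k * k) * (2 ^ k + 1))
      = (1/2) ^ ((k + k * k) * 2 ^ k) * (1/2) ^ (k + k * k)"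
    by (simp add: algebra_simps power_add)
  also have "\<dots> \<le> (1 - x) ^ (n * d) * (1/2) ^ n"
  proof (intro mult_mono)
    have "(1/2::real) ^ ((k + k * k) * 2 ^ k) \<le> (1/2) ^ (n * d)"
      using assms(3,4) by (intro power_decreasing mult_mono) auto
    also have "\<dots> \<le> (1 - x) ^ (n * d)" using assms(1,2) by (intro power_mono) auto
    finally show "(1/2::real) ^ ((k + k * k) * 2 ^ k) \<le> (1 - x) ^ (n * d)" .
    show "(1/2::real) ^ (k + k * k) \<le> (1/2) ^ n" using assms(3) by (intro power_decreasing) auto
  qed (use assms(1,2) in auto)
  finally show ?thesis .
qed

lemma card_hits_forbidden_ge:
  fixes Cs :: "'v clause set"
  assumes "0 < \<eta>" "\<eta> < 1" "0 < k" and sk: "real s \<le> real k powr (1 - \<eta>)"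
    and kd: "log 2 d + 6 * real k powr (1 - \<eta>/2) + log 2 k + 3 \<le> real k"
    and K: "kds_CNF k d s V Cs" and c: "is_clause k c" "vbl c \<subseteq> V"
    and \<rho>: "\<rho> \<in> sat_assignments V Cs" "hits_forbidden \<rho> c"
  shows "(1/2) ^ ((k + k * k) * (2 ^ k + 1)) * card (sat_assignments V Cs)
    \<le> card {\<sigma> \<in> sat_assignments V Cs. hits_forbidden \<sigma> c}"
proof -
  obtain U where U: "vbl c \<subseteq> U" "U \<subseteq> V" "card U \<le> k + k * k"
    and meet: "\<And>c'. c' \<in> Cs \<Longrightarrow> \<not> vbl c' \<subseteq> U \<Longrightarrow>
      card (vbl c' \<inter> U) \<le> 6 * real k powr (1 - \<eta>/2) + 1"
    using heavy_closure[OF K \<open>0 < \<eta>\<close> \<open>\<eta> < 1\<close> \<open>0 < k\<close> sk c] by blast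
  define r where "r = real k - 6 * real k powr (1 - \<eta>/2) - 1"
  have "2 + log 2 k + log 2 d \<le> r" using kd unfolding r_def by linarith
  then obtain x :: real where x: "0 \<le> x" "x \<le> 1/2"
    and lll: "\<And>j. r \<le> real j \<Longrightarrow> (1/2) ^ j \<le> x * (1 - x) ^ (k * d)"
    by (rule local_lemma_parameter[OF \<open>0 < k\<close>]) blast+
  have "d \<le> 2 ^ k"
  proof (cases "d = 0")
    case False
    have "log 2 k \<ge> 0" "real k powr (1 - \<eta>/2) \<ge> 0" using \<open>0 < k\<close> by auto
    then have "log 2 d \<le> real k" using kd by linarith
    then have "real d \<le> 2 powr real k" using False by (simp add: log_le_iff)
    then show ?thesis by (simp add: powr_realpow flip: of_nat_le_iff)
  qed simp
  have "(1/2) ^ ((k + k * k) * (2 ^ k + 1)) * card (sat_assignments V Cs)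
      \<le> (1 - x) ^ (card U * d) * (1/2) ^ card U * card (sat_assignments V Cs)"
    using pinning_loss_ge[OF x U(3) \<open>d \<le> 2 ^ k\<close>] by (intro mult_right_mono) auto
  also have "\<dots> \<le> card {\<sigma> \<in> sat_assignments V Cs. agrees_on U \<rho> \<sigma>}"
  proof (rule card_sat_pinned_ge[OF K \<open>U \<subseteq> V\<close> \<rho>(1) x(1)])
    show "x \<le> 1" using x by simp
    fix c' assume "c' \<in> Cs" "\<not> vbl c' \<subseteq> U"
    have "is_clause k c'" using K \<open>c' \<in> Cs\<close> unfolding kds_CNF_def by blast
    then have "card (vbl c' \<inter> U) \<le> k"
      unfolding is_clause_def vbl_def by (metis card_mono finite_imageI inf_le1)
    then have "r \<le> real (k - card (vbl c' \<inter> U))"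
      using meet[OF \<open>c' \<in> Cs\<close> \<open>\<not> vbl c' \<subseteq> U\<close>] unfolding r_def by (simp add: of_nat_diff)
    then show "(1/2) ^ (k - card (vbl c' \<inter> U)) \<le> x * (1 - x) ^ (k * d)" by (rule lll)
  qed
  also have "card {\<sigma> \<in> sat_assignments V Cs. agrees_on U \<rho> \<sigma>}
      \<le> card {\<sigma> \<in> sat_assignments V Cs. hits_forbidden \<sigma> c}"
    using finite_sat_assignments[of V Cs] K \<rho>(2) U(1)
    unfolding kds_CNF_def hits_forbidden_def vbl_def agrees_on_def
    by (intro card_mono) force+
  finally show ?thesis by simp
qed

lemma resilientI:
  fixes \<theta> :: real
  assumes "finite V"
    and "\<And>c \<rho>. is_clause k c \<Longrightarrow> vbl c \<subseteq> V \<Longrightarrow> c \<notin> Cs \<Longrightarrow> \<rho> \<in> sat_assignments V Cs \<Longrightarrow>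
      hits_forbidden \<rho> c \<Longrightarrow>
      \<theta> * card (sat_assignments V Cs) \<le> card {\<sigma> \<in> sat_assignments V Cs. hits_forbidden \<sigma> c}"
  shows "resilient \<theta> k V Cs"
  unfolding resilient_def
proof (intro allI impI)
  fix c :: "'a clause" assume c: "is_clause k c \<and> vbl c \<subseteq> V \<and> c \<notin> Cs"
  show "prob_forbidden V Cs c = 0 \<or> \<theta> \<le> prob_forbidden V Cs c"
  proof (cases "{\<sigma> \<in> sat_assignments V Cs. hits_forbidden \<sigma> c} = {}")
    case True
    then show ?thesis unfolding prob_forbidden_def True by simp
  next
    case False
    then obtain \<rho> where \<rho>: "\<rho> \<in> sat_assignments V Cs" "hits_forbidden \<rho> c" by blast
    have "0 < card (sat_assignments V Cs)"
      using finite_sat_assignments[OF assms(1)] \<rho>(1) card_gt_0_iff by blast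
    then show ?thesis
      using assms(2)[OF _ _ _ \<rho>] c unfolding prob_forbidden_def by (simp add: pos_le_divide_eq)
  qed
qed

theorem lemma3p1:
  fixes \<eta> :: real
  assumes "0 < \<eta>" and "\<eta> < 1"
  shows "\<exists>f :: nat \<Rightarrow> real. f \<in> o(\<lambda>k. real k) \<and>
           (\<exists>C0 :: real. \<exists>\<theta> :: nat \<Rightarrow> real. (\<forall>k. \<theta> k > 0) \<and>
             (\<forall>k d s (V :: 'v set) Cs.
                real k \<ge> 2 powr (2 / \<eta>) \<and>
                real s \<le> real k powr (1 - \<eta>) \<and>
                real k \<ge> log 2 (real d) + f k + C0 \<and>
                kds_CNF k d s V Cs
                \<longrightarrow> resilient (\<theta> k) k V Cs))"
proof (intro exI conjI allI impI)
  show "(\<lambda>k. 6 * real k powr (1 - \<eta>/2) + log 2 k) \<in> o(\<lambda>k. real k)"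
    using assms by real_asymp
  show "(1/2::real) ^ ((k + k * k) * (2 ^ k + 1)) > 0" for k :: nat by simp
  fix k d s and V :: "'v set" and Cs
  assume h: "real k \<ge> 2 powr (2 / \<eta>) \<and> real s \<le> real k powr (1 - \<eta>) \<and>
    real k \<ge> log 2 (real d) + (6 * real k powr (1 - \<eta>/2) + log 2 k) + 3 \<and> kds_CNF k d s V Cs"
  \<comment> \<open>The lower bound \<open>2\<^bsup>2/\<eta>\<^esup>\<close> on \<open>k\<close> is only needed for \<open>k > 0\<close>.\<close>
  have "0 < (2::real) powr (2 / \<eta>)" by simp
  then have "0 < real k" using h by linarith
  then have "0 < k" by simp
  show "resilient ((1/2) ^ ((k + k * k) * (2 ^ k + 1))) k V Cs"
  proof (rule resilientI)
    show "finite V" using h unfolding kds_CNF_def by simp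
    fix c \<rho> assume "is_clause k c" "vbl c \<subseteq> V" "\<rho> \<in> sat_assignments V Cs" "hits_forbidden \<rho> c"
    then show "(1/2) ^ ((k + k * k) * (2 ^ k + 1)) * card (sat_assignments V Cs)
        \<le> card {\<sigma> \<in> sat_assignments V Cs. hits_forbidden \<sigma> c}"
      using h by (intro card_hits_forbidden_ge[OF assms \<open>0 < k\<close>]) auto
  qed
qed

end
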